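(* Let $(V^{(k)})_{k\ge1}$ be a sequence of $n$-parameter persistence modules that is Cauchy for the interleaving distance. Then there is an $n$-parameter persistence module $V$ with $d_I(V^{(k)},V)\to0$ as $k\to\infty$; moreover $V$ can be constructed as a colimit of shifts of the modules of a subsequence of $(V^{(k)})$ along shifts of interleaving morphisms.
   Context: Fix a field $\mathbb{k}$. An $n$-parameter persistence module is a functor $V:\mathbf{R}^n\to\mathbf{Vect}_{\mathbb{k}}$ ($\mathbf{R}^n$ with componentwise order). For $s\in\mathbb{R}^n$, $\varepsilon\in\mathbb{R}$, $s+\varepsilon$ adds $\varepsilon$ to each coordinate; $V[\varepsilon]_s=V_{s+\varepsilon}$ and $\eta_\varepsilon:V\to V[\varepsilon]$ ($\varepsilon\ge0$) consists of structure maps. An $\varepsilon$-interleaving between $V$ and $W$ is a pair $f:V\to W[\varepsilon]$, $g:W\to V[\varepsilon]$ with $g[\varepsilon]\circ f=\eta^V_{2\varepsilon}$ and $f[\varepsilon]\circ g=\eta^W_{2\varepsilon}$; $d_I(V,W)$ is the infimum of $\varepsilon\ge0$ for which an $\varepsilon$-interleaving exists. *)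

theory Defs
  imports "HOL-Analysis.Analysis" "HOL-Library.Function_Algebras"
begin

text \<open>Vector spaces over a field 'k are represented as subspaces of an ambient
  'k-vector space of type 'v (with scalar multiplication sc satisfying the
  axioms of the library locale vector_space).  The poset R^n is real^'n with the
  componentwise order (library order on vec).\<close>

definition subspace_of :: "('k::field \<Rightarrow> 'v::ab_group_add \<Rightarrow> 'v) \<Rightarrow> 'v set \<Rightarrow> bool" where
  "subspace_of sc S \<longleftrightarrow> 0 \<in> S \<and> (\<forall>x\<in>S. \<forall>y\<in>S. x + y \<in> S) \<and> (\<forall>c. \<forall>x\<in>S. sc c x \<in> S)"

definition lin_on :: "('k::field \<Rightarrow> 'v::ab_group_add \<Rightarrow> 'v) \<Rightarrow> ('k \<Rightarrow> 'w::ab_group_add \<Rightarrow> 'w)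
    \<Rightarrow> 'v set \<Rightarrow> 'w set \<Rightarrow> ('v \<Rightarrow> 'w) \<Rightarrow> bool" where
  "lin_on sc1 sc2 S T f \<longleftrightarrow> (\<forall>x\<in>S. f x \<in> T) \<and> (\<forall>x\<in>S. \<forall>y\<in>S. f (x + y) = f x + f y)
      \<and> (\<forall>c. \<forall>x\<in>S. f (sc1 c x) = sc2 c (f x))"

record ('n, 'v) pmod =
  sp :: "real^'n \<Rightarrow> 'v set"
  mp :: "real^'n \<Rightarrow> real^'n \<Rightarrow> 'v \<Rightarrow> 'v"

definition is_pmod :: "('k::field \<Rightarrow> 'v::ab_group_add \<Rightarrow> 'v) \<Rightarrow> ('n::finite, 'v) pmod \<Rightarrow> bool" where
  "is_pmod sc V \<longleftrightarrow>
     (\<forall>s. subspace_of sc (sp V s)) \<and>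
     (\<forall>s t. s \<le> t \<longrightarrow> lin_on sc sc (sp V s) (sp V t) (mp V s t)) \<and>
     (\<forall>s. \<forall>x\<in>sp V s. mp V s s x = x) \<and>
     (\<forall>s t u. s \<le> t \<longrightarrow> t \<le> u \<longrightarrow> (\<forall>x\<in>sp V s. mp V t u (mp V s t x) = mp V s u x))"

definition sh :: "real \<Rightarrow> real^'n::finite \<Rightarrow> real^'n" where
  "sh e s = s + (\<chi> i. e)"

definition shift_pmod :: "real \<Rightarrow> ('n::finite, 'v) pmod \<Rightarrow> ('n, 'v) pmod" where
  "shift_pmod e V = \<lparr> sp = (\<lambda>s. sp V (sh e s)), mp = (\<lambda>s t. mp V (sh e s) (sh e t)) \<rparr>"

definition morph :: "('k::field \<Rightarrow> 'v::ab_group_add \<Rightarrow> 'v) \<Rightarrow> ('k \<Rightarrow> 'w::ab_group_add \<Rightarrow> 'w) \<Rightarrow> real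
    \<Rightarrow> ('n::finite, 'v) pmod \<Rightarrow> ('n, 'w) pmod \<Rightarrow> (real^'n \<Rightarrow> 'v \<Rightarrow> 'w) \<Rightarrow> bool" where
  "morph scV scW e V W f \<longleftrightarrow>
     (\<forall>s. lin_on scV scW (sp V s) (sp W (sh e s)) (f s)) \<and>
     (\<forall>s t. s \<le> t \<longrightarrow> (\<forall>x\<in>sp V s. f t (mp V s t x) = mp W (sh e s) (sh e t) (f s x)))"

definition interleaving :: "('k::field \<Rightarrow> 'v::ab_group_add \<Rightarrow> 'v) \<Rightarrow> ('k \<Rightarrow> 'w::ab_group_add \<Rightarrow> 'w) \<Rightarrow> real
    \<Rightarrow> ('n::finite, 'v) pmod \<Rightarrow> ('n, 'w) pmod
    \<Rightarrow> (real^'n \<Rightarrow> 'v \<Rightarrow> 'w) \<Rightarrow> (real^'n \<Rightarrow> 'w \<Rightarrow> 'v) \<Rightarrow> bool" where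
  "interleaving scV scW e V W f g \<longleftrightarrow> 0 \<le> e \<and>
     morph scV scW e V W f \<and> morph scW scV e W V g \<and>
     (\<forall>s. \<forall>x\<in>sp V s. g (sh e s) (f s x) = mp V s (sh (2*e) s) x) \<and>
     (\<forall>s. \<forall>y\<in>sp W s. f (sh e s) (g s y) = mp W s (sh (2*e) s) y)"

definition interleaved :: "('k::field \<Rightarrow> 'v::ab_group_add \<Rightarrow> 'v) \<Rightarrow> ('k \<Rightarrow> 'w::ab_group_add \<Rightarrow> 'w) \<Rightarrow> real
    \<Rightarrow> ('n::finite, 'v) pmod \<Rightarrow> ('n, 'w) pmod \<Rightarrow> bool" where
  "interleaved scV scW e V W \<longleftrightarrow> (\<exists>f g. interleaving scV scW e V W f g)"

text \<open>Interleaving distance, valued in extended reals (\<infinity> if no interleaving exists).\<close>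
definition dI :: "('k::field \<Rightarrow> 'v::ab_group_add \<Rightarrow> 'v) \<Rightarrow> ('k \<Rightarrow> 'w::ab_group_add \<Rightarrow> 'w)
    \<Rightarrow> ('n::finite, 'v) pmod \<Rightarrow> ('n, 'w) pmod \<Rightarrow> ereal" where
  "dI scV scW V W = Inf (ereal ` {e. 0 \<le> e \<and> interleaved scV scW e V W})"

definition fun_scale :: "('k \<Rightarrow> 'v \<Rightarrow> 'v) \<Rightarrow> 'k \<Rightarrow> (nat \<Rightarrow> 'v) \<Rightarrow> (nat \<Rightarrow> 'v)" where
  "fun_scale sc c f = (\<lambda>i. sc c (f i))"

fun seq_trans :: "(nat \<Rightarrow> real^'n::finite \<Rightarrow> 'v \<Rightarrow> 'v) \<Rightarrow> nat \<Rightarrow> nat \<Rightarrow> real^'n \<Rightarrow> 'v \<Rightarrow> 'v" where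
  "seq_trans g j 0 s x = x"
| "seq_trans g j (Suc d) s x = g (j + d) s (seq_trans g j d s x)"

text \<open>Colimits of functors to Vect are computed pointwise, and a sequential
  colimit of vector spaces is characterised by: the cocone is jointly surjective and
  an element is killed by \<iota> j iff it is killed by some transition map.\<close>
definition is_seq_colim :: "('k::field \<Rightarrow> 'v::ab_group_add \<Rightarrow> 'v) \<Rightarrow> ('k \<Rightarrow> 'w::ab_group_add \<Rightarrow> 'w)
    \<Rightarrow> (nat \<Rightarrow> ('n::finite, 'v) pmod) \<Rightarrow> (nat \<Rightarrow> real^'n \<Rightarrow> 'v \<Rightarrow> 'v)
    \<Rightarrow> ('n, 'w) pmod \<Rightarrow> (nat \<Rightarrow> real^'n \<Rightarrow> 'v \<Rightarrow> 'w) \<Rightarrow> bool" where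
  "is_seq_colim scU scV U g V \<iota> \<longleftrightarrow>
     (\<forall>j. morph scU scU 0 (U j) (U (Suc j)) (g j)) \<and>
     (\<forall>j. morph scU scV 0 (U j) V (\<iota> j)) \<and>
     (\<forall>j s. \<forall>x\<in>sp (U j) s. \<iota> (Suc j) s (g j s x) = \<iota> j s x) \<and>
     (\<forall>s. \<forall>y\<in>sp V s. \<exists>j. \<exists>x\<in>sp (U j) s. \<iota> j s x = y) \<and>
     (\<forall>j s. \<forall>x\<in>sp (U j) s. \<iota> j s x = 0 \<longrightarrow> (\<exists>d. seq_trans g j d s x = 0))"

end

theory Submission
  imports Defs
begin

text \<open>Pass to a subsequence \<open>W\<^sub>j\<close> of the Cauchy sequence whose consecutive terms are
  \<open>\<epsilon>\<^sub>j\<close>-interleaved by \<open>(f\<^sub>j, h\<^sub>j)\<close> with \<open>\<epsilon>\<close> summable. With the tail sums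
  \<open>c\<^sub>j = - (\<Sum>i \<ge> j. \<epsilon>\<^sub>i)\<close>, the \<open>f\<^sub>j\<close> become degree-0 morphisms
  \<open>W\<^sub>j[c\<^sub>j] \<rightarrow> W\<^sub>j\<^sub>+\<^sub>1[c\<^sub>j\<^sub>+\<^sub>1]\<close>; let \<open>V\<close> be their colimit. Composing the \<open>h\<^sub>i\<close>
  for \<open>i \<ge> j\<close> gives a map from \<open>V\<close> back to \<open>W\<^sub>j[c\<^sub>j]\<close> of degree \<open>-2c\<^sub>j\<close>, and as the
  interleaving identities telescope, \<open>W\<^sub>j\<close> and \<open>V\<close> are \<open>(-c\<^sub>j)\<close>-interleaved. Since
  \<open>c\<^sub>j \<rightarrow> 0\<close>, the triangle inequality and the Cauchy property give \<open>d\<^sub>I(V\<^sub>k, V) \<rightarrow> 0\<close>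
  along the whole sequence.\<close>

section \<open>Shifts, morphisms and interleavings\<close>

lemma sh_sh [simp]: "sh a (sh b s) = sh (b + a) s"
  unfolding sh_def by (simp add: vec_eq_iff algebra_simps)

lemma sh_0 [simp]: "sh 0 s = s"
  unfolding sh_def by (simp add: vec_eq_iff)

lemma sh_le_sh: "a \<le> b \<Longrightarrow> sh a s \<le> sh b s"
  unfolding sh_def by (simp add: less_eq_vec_def)

lemma sh_mono: "s \<le> t \<Longrightarrow> sh a s \<le> sh a t"
  unfolding sh_def by (simp add: less_eq_vec_def)

lemma le_sh: "0 \<le> a \<Longrightarrow> s \<le> sh a s"
  using sh_le_sh[of 0 a s] by simp

lemma subspace_of_iff_subspace: "vector_space sc \<Longrightarrow> subspace_of sc S \<longleftrightarrow> module.subspace sc S"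
  unfolding subspace_of_def by (simp add: module.subspace_def module_iff_vector_space)

lemma vector_space_fun_scale: "vector_space sc \<Longrightarrow> vector_space (fun_scale sc)"
  unfolding vector_space_def fun_scale_def by (auto simp: fun_eq_iff)

lemma fun_scale_apply [simp]: "fun_scale sc c f i = sc c (f i)"
  by (simp add: fun_scale_def)

lemma scale_zero_right: "vector_space sc \<Longrightarrow> sc c 0 = 0"
  by (metis module.scale_zero_right module_iff_vector_space)

lemma subspace_of_0: "subspace_of sc S \<Longrightarrow> 0 \<in> S"
  by (simp add: subspace_of_def)

lemma subspace_of_add: "subspace_of sc S \<Longrightarrow> x \<in> S \<Longrightarrow> y \<in> S \<Longrightarrow> x + y \<in> S"
  by (simp add: subspace_of_def)

lemma subspace_of_scale: "subspace_of sc S \<Longrightarrow> x \<in> S \<Longrightarrow> sc c x \<in> S"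
  by (simp add: subspace_of_def)

lemma subspace_of_diff:
  "vector_space sc \<Longrightarrow> subspace_of sc S \<Longrightarrow> x \<in> S \<Longrightarrow> y \<in> S \<Longrightarrow> x - y \<in> S"
  by (metis subspace_of_iff_subspace module.subspace_diff module_iff_vector_space)

lemma subspace_of_minus_commute:
  "vector_space sc \<Longrightarrow> subspace_of sc S \<Longrightarrow> x - y \<in> S \<Longrightarrow> y - x \<in> S"
  by (metis subspace_of_iff_subspace module.subspace_neg module_iff_vector_space minus_diff_eq)

lemma lin_on_in: "lin_on sc1 sc2 S T f \<Longrightarrow> x \<in> S \<Longrightarrow> f x \<in> T"
  by (simp add: lin_on_def)

lemma lin_on_add: "lin_on sc1 sc2 S T f \<Longrightarrow> x \<in> S \<Longrightarrow> y \<in> S \<Longrightarrow> f (x + y) = f x + f y"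
  by (simp add: lin_on_def)

lemma lin_on_scale: "lin_on sc1 sc2 S T f \<Longrightarrow> x \<in> S \<Longrightarrow> f (sc1 c x) = sc2 c (f x)"
  by (simp add: lin_on_def)

lemma lin_on_0: "lin_on sc1 sc2 S T f \<Longrightarrow> subspace_of sc1 S \<Longrightarrow> f 0 = 0"
  using lin_on_add[of sc1 sc2 S T f 0 0] by (simp add: subspace_of_0)

lemma pmod_subspace: "is_pmod sc X \<Longrightarrow> subspace_of sc (sp X s)"
  by (simp add: is_pmod_def)

lemma pmod_lin: "is_pmod sc X \<Longrightarrow> s \<le> t \<Longrightarrow> lin_on sc sc (sp X s) (sp X t) (mp X s t)"
  by (simp add: is_pmod_def)

lemma pmod_mp_in: "is_pmod sc X \<Longrightarrow> s \<le> t \<Longrightarrow> x \<in> sp X s \<Longrightarrow> mp X s t x \<in> sp X t"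
  using lin_on_in[OF pmod_lin] by blast

lemma pmod_mp_add:
  "is_pmod sc X \<Longrightarrow> s \<le> t \<Longrightarrow> x \<in> sp X s \<Longrightarrow> y \<in> sp X s \<Longrightarrow> mp X s t (x + y) = mp X s t x + mp X s t y"
  using lin_on_add[OF pmod_lin] by blast

lemma pmod_mp_scale: "is_pmod sc X \<Longrightarrow> s \<le> t \<Longrightarrow> x \<in> sp X s \<Longrightarrow> mp X s t (sc c x) = sc c (mp X s t x)"
  using lin_on_scale[OF pmod_lin] by blast

lemma pmod_mp_0: "is_pmod sc X \<Longrightarrow> s \<le> t \<Longrightarrow> mp X s t 0 = 0"
  using lin_on_0[OF pmod_lin pmod_subspace] by blast

lemma pmod_mp_id: "is_pmod sc X \<Longrightarrow> x \<in> sp X s \<Longrightarrow> mp X s s x = x"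
  by (simp add: is_pmod_def)

lemma pmod_mp_comp:
  "is_pmod sc X \<Longrightarrow> s \<le> t \<Longrightarrow> t \<le> u \<Longrightarrow> x \<in> sp X s \<Longrightarrow> mp X t u (mp X s t x) = mp X s u x"
  by (simp add: is_pmod_def)

lemma morph_lin: "morph sc1 sc2 e X Y f \<Longrightarrow> lin_on sc1 sc2 (sp X s) (sp Y (sh e s)) (f s)"
  by (simp add: morph_def)

lemma morph_in: "morph sc1 sc2 e X Y f \<Longrightarrow> x \<in> sp X s \<Longrightarrow> f s x \<in> sp Y (sh e s)"
  by (simp add: morph_def lin_on_def)

lemma morph_add: "morph sc1 sc2 e X Y f \<Longrightarrow> x \<in> sp X s \<Longrightarrow> y \<in> sp X s \<Longrightarrow> f s (x + y) = f s x + f s y"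
  by (simp add: morph_def lin_on_def)

lemma morph_scale: "morph sc1 sc2 e X Y f \<Longrightarrow> x \<in> sp X s \<Longrightarrow> f s (sc1 c x) = sc2 c (f s x)"
  by (simp add: morph_def lin_on_def)

lemma morph_0: "morph sc1 sc2 e X Y f \<Longrightarrow> is_pmod sc1 X \<Longrightarrow> f s 0 = 0"
  using lin_on_0[OF morph_lin pmod_subspace] by blast

lemma morph_natural:
  "morph sc1 sc2 e X Y f \<Longrightarrow> s \<le> t \<Longrightarrow> x \<in> sp X s \<Longrightarrow> f t (mp X s t x) = mp Y (sh e s) (sh e t) (f s x)"
  by (simp add: morph_def)

lemma sp_shift_pmod [simp]: "sp (shift_pmod c X) s = sp X (sh c s)"
  by (simp add: shift_pmod_def)

lemma mp_shift_pmod [simp]: "mp (shift_pmod c X) s t = mp X (sh c s) (sh c t)"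
  by (simp add: shift_pmod_def)

lemma shift_pmod_0 [simp]: "shift_pmod 0 X = X"
  by (simp add: shift_pmod_def)

lemma shift_pmod_shift_pmod [simp]: "shift_pmod a (shift_pmod b X) = shift_pmod (a + b) X"
  by (simp add: shift_pmod_def)

lemma is_pmod_shift_pmod: "is_pmod sc X \<Longrightarrow> is_pmod sc (shift_pmod c X)"
  unfolding is_pmod_def by (auto simp: sh_mono)

lemma morph_shift_pmod:
  assumes f: "morph sc1 sc2 e X Y f" and "c1 + e = e' + c2"
  shows "morph sc1 sc2 e' (shift_pmod c1 X) (shift_pmod c2 Y) (\<lambda>s. f (sh c1 s))"
proof -
  have shifts: "sh (c1 + e) s = sh (e' + c2) s" for s
    using assms(2) by simp
  have "lin_on sc1 sc2 (sp X (sh c1 s)) (sp Y (sh (c1 + e) s)) (f (sh c1 s))" for s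
    using morph_lin[OF f, of "sh c1 s"] by simp
  then show ?thesis
    unfolding morph_def using morph_natural[OF f sh_mono] by (simp add: shifts)
qed

lemma morph_comp:
  assumes f1: "morph sc1 sc2 a X Y f1" and f2: "morph sc2 sc3 b Y Z f2"
  shows "morph sc1 sc3 (a + b) X Z (\<lambda>s x. f2 (sh a s) (f1 s x))"
  unfolding morph_def
proof (intro conjI allI impI ballI)
  fix s
  show "lin_on sc1 sc3 (sp X s) (sp Z (sh (a + b) s)) (\<lambda>x. f2 (sh a s) (f1 s x))"
    using morph_lin[OF f1, of s] morph_lin[OF f2, of "sh a s"] by (auto simp: lin_on_def)
next
  fix s t x assume "s \<le> t" and "x \<in> sp X s"
  then show "f2 (sh a t) (f1 t (mp X s t x))
      = mp Z (sh (a + b) s) (sh (a + b) t) (f2 (sh a s) (f1 s x))"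
    using morph_natural[OF f1] morph_natural[OF f2 sh_mono] morph_in[OF f1] by simp
qed

lemma interleaving_comp_round_trip:
  assumes X: "is_pmod sc1 X" and "0 \<le> a" "0 \<le> b"
    and f1: "morph sc1 sc2 a X Y f1" and g1: "morph sc2 sc1 a Y X g1"
    and round1: "\<And>s x. x \<in> sp X s \<Longrightarrow> g1 (sh a s) (f1 s x) = mp X s (sh (2*a) s) x"
    and round2: "\<And>s y. y \<in> sp Y s \<Longrightarrow> g2 (sh b s) (f2 s y) = mp Y s (sh (2*b) s) y"
    and x: "x \<in> sp X s"
  shows "g1 (sh b (sh (a + b) s)) (g2 (sh (a + b) s) (f2 (sh a s) (f1 s x)))
    = mp X s (sh (2 * (a + b)) s) x"
proof -
  have y: "f1 s x \<in> sp Y (sh a s)"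
    by (rule morph_in[OF f1 x])
  have "g1 (sh b (sh (a + b) s)) (g2 (sh (a + b) s) (f2 (sh a s) (f1 s x)))
      = g1 (sh (a + 2*b) s) (mp Y (sh a s) (sh (a + 2*b) s) (f1 s x))"
    using round2[OF y] by (simp add: algebra_simps)
  also have "\<dots> = mp X (sh (2*a) s) (sh (2*a + 2*b) s) (g1 (sh a s) (f1 s x))"
    using morph_natural[OF g1 sh_le_sh[of a "a + 2*b"] y] \<open>0 \<le> b\<close> by (simp add: algebra_simps)
  also have "\<dots> = mp X (sh (2*a) s) (sh (2*a + 2*b) s) (mp X s (sh (2*a) s) x)"
    using round1[OF x] by simp
  also have "\<dots> = mp X s (sh (2 * (a + b)) s) x"
    using pmod_mp_comp[OF X le_sh sh_le_sh x] assms(2,3) by (simp add: algebra_simps)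
  finally show ?thesis .
qed

lemma interleaving_comp:
  assumes X: "is_pmod sc1 X" and Z: "is_pmod sc3 Z"
    and XY: "interleaving sc1 sc2 a X Y f1 g1" and YZ: "interleaving sc2 sc3 b Y Z f2 g2"
  shows "interleaving sc1 sc3 (a + b) X Z (\<lambda>s x. f2 (sh a s) (f1 s x)) (\<lambda>s z. g1 (sh b s) (g2 s z))"
proof -
  have "0 \<le> a" "morph sc1 sc2 a X Y f1" "morph sc2 sc1 a Y X g1"
    "\<And>s x. x \<in> sp X s \<Longrightarrow> g1 (sh a s) (f1 s x) = mp X s (sh (2*a) s) x"
    "\<And>s y. y \<in> sp Y s \<Longrightarrow> f1 (sh a s) (g1 s y) = mp Y s (sh (2*a) s) y"
    using XY by (auto simp: interleaving_def)
  moreover have "0 \<le> b" "morph sc2 sc3 b Y Z f2" "morph sc3 sc2 b Z Y g2"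
    "\<And>s y. y \<in> sp Y s \<Longrightarrow> g2 (sh b s) (f2 s y) = mp Y s (sh (2*b) s) y"
    "\<And>s z. z \<in> sp Z s \<Longrightarrow> f2 (sh b s) (g2 s z) = mp Z s (sh (2*b) s) z"
    using YZ by (auto simp: interleaving_def)
  ultimately show ?thesis
    unfolding interleaving_def
    using morph_comp[of sc1 sc2 a X Y f1 sc3 b Z f2] morph_comp[of sc3 sc2 b Z Y g2 sc1 a X g1]
      interleaving_comp_round_trip[OF X, of a b sc2 Y f1 g1 g2 f2]
      interleaving_comp_round_trip[OF Z, of b a sc2 Y g2 f2 f1 g1]
    by (simp add: add.commute)
qed

lemma interleaving_rebalance:
  assumes "0 \<le> r"
    and i: "morph sc1 sc2 0 (shift_pmod (-r) W) V i"
    and G: "morph sc2 sc1 (2*r) V (shift_pmod (-r) W) G"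
    and "\<And>s x. x \<in> sp (shift_pmod (-r) W) s \<Longrightarrow> G s (i s x) = mp (shift_pmod (-r) W) s (sh (2*r) s) x"
    and "\<And>s y. y \<in> sp V s \<Longrightarrow> i (sh (2*r) s) (G s y) = mp V s (sh (2*r) s) y"
  shows "interleaving sc1 sc2 r W V (\<lambda>s. i (sh r s)) G"
proof -
  have shifts: "sh (-r) (sh r s) = s" "sh r (sh r s) = sh (2*r) s"
    "sh (-r) (sh (2*r) (sh r s)) = sh (2*r) s" for s
    by (simp_all add: algebra_simps)
  have "morph sc1 sc2 r W V (\<lambda>s. i (sh r s))"
    using morph_shift_pmod[OF i, of r r 0] by simp
  moreover have "morph sc2 sc1 r V W G"
    using morph_shift_pmod[OF G, of 0 r r] by simp
  ultimately show ?thesis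
    unfolding interleaving_def using assms(1,4,5) by (simp add: shifts del: sh_sh)
qed

lemma interleaving_shifted_maps:
  assumes fh: "interleaving sc1 sc2 e X Y f h" and c': "c' = c + e"
  shows "morph sc1 sc2 0 (shift_pmod c X) (shift_pmod c' Y) (\<lambda>s. f (sh c s))"
    and "morph sc2 sc1 (2*e) (shift_pmod c' Y) (shift_pmod c X) (\<lambda>s. h (sh c' s))"
    and "x \<in> sp (shift_pmod c X) s \<Longrightarrow>
      h (sh c' s) (f (sh c s) x) = mp (shift_pmod c X) s (sh (2*e) s) x"
    and "y \<in> sp (shift_pmod c' Y) s \<Longrightarrow>
      f (sh c (sh (2*e) s)) (h (sh c' s) y) = mp (shift_pmod c' Y) s (sh (2*e) s) y"
proof -
  have f: "morph sc1 sc2 e X Y f" and h: "morph sc2 sc1 e Y X h"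
    using fh by (simp_all add: interleaving_def)
  show "morph sc1 sc2 0 (shift_pmod c X) (shift_pmod c' Y) (\<lambda>s. f (sh c s))"
    by (rule morph_shift_pmod[OF f]) (simp add: c')
  show "morph sc2 sc1 (2*e) (shift_pmod c' Y) (shift_pmod c X) (\<lambda>s. h (sh c' s))"
    by (rule morph_shift_pmod[OF h]) (simp add: c')
  have shifts: "sh e (sh c s) = sh c' s" "sh (2*e) (sh c s) = sh c (sh (2*e) s)"
    "sh e (sh c' s) = sh c (sh (2*e) s)" "sh (2*e) (sh c' s) = sh c' (sh (2*e) s)"
    by (simp_all add: c' algebra_simps)
  show "x \<in> sp (shift_pmod c X) s \<Longrightarrow>
    h (sh c' s) (f (sh c s) x) = mp (shift_pmod c X) s (sh (2*e) s) x"
    using fh unfolding interleaving_def by (metis shifts(1,2) sp_shift_pmod mp_shift_pmod)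
  show "y \<in> sp (shift_pmod c' Y) s \<Longrightarrow>
      f (sh c (sh (2*e) s)) (h (sh c' s) y) = mp (shift_pmod c' Y) s (sh (2*e) s) y"
    using fh unfolding interleaving_def by (metis shifts(3,4) sp_shift_pmod mp_shift_pmod)
qed

lemma dI_nonneg: "0 \<le> dI sc1 sc2 X Y"
  unfolding dI_def by (rule Inf_greatest) auto

lemma dI_le: "interleaved sc1 sc2 e X Y \<Longrightarrow> dI sc1 sc2 X Y \<le> ereal e"
  unfolding dI_def by (rule Inf_lower) (auto simp: interleaved_def interleaving_def)

lemma dI_lessE:
  assumes "dI sc1 sc2 X Y < ereal e"
  obtains e' where "e' < e" "interleaved sc1 sc2 e' X Y"
  using assms unfolding dI_def by (auto simp: Inf_less_iff)

lemma dI_triangle_less: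
  assumes "is_pmod sc1 X" "is_pmod sc3 Z"
    and "dI sc1 sc2 X Y < ereal a" "dI sc2 sc3 Y Z < ereal b"
  shows "dI sc1 sc3 X Z < ereal (a + b)"
proof -
  obtain a' where a': "a' < a" "interleaved sc1 sc2 a' X Y"
    using assms(3) by (rule dI_lessE)
  obtain b' where b': "b' < b" "interleaved sc2 sc3 b' Y Z"
    using assms(4) by (rule dI_lessE)
  have "interleaved sc1 sc3 (a' + b') X Z"
    using a'(2) b'(2) interleaving_comp[OF assms(1,2)] unfolding interleaved_def by blast
  then have "dI sc1 sc3 X Z \<le> ereal (a' + b')"
    by (rule dI_le)
  also have "\<dots> < ereal (a + b)"
    using a'(1) b'(1) by simp
  finally show ?thesis .
qed

section \<open>Sequential colimits\<close>

lemma exists_linear_retraction: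
  fixes scale :: "'a::field \<Rightarrow> 'b::ab_group_add \<Rightarrow> 'b"
  assumes "vector_space scale" and N: "module.subspace scale N"
  shows "\<exists>Q. Vector_Spaces.linear scale scale Q \<and> (\<forall>x. Q x \<in> N) \<and> (\<forall>x\<in>N. Q x = x)"
proof -
  interpret vector_space scale by fact
  interpret vp: vector_space_pair scale scale ..
  obtain BN where BN: "BN \<subseteq> N" "independent BN" "N \<subseteq> span BN"
    by (rule basis_exists)
  obtain B where B: "BN \<subseteq> B" "independent B"
    using maximal_independent_subset_extend[of BN UNIV] BN by blast
  define Q where "Q = vp.construct B (\<lambda>b. if b \<in> BN then b else 0)"
  have lin: "Vector_Spaces.linear scale scale Q"
    unfolding Q_def by (rule vp.linear_construct[OF B(2)])
  have "(\<lambda>b. if b \<in> BN then b else 0) ` B \<subseteq> N"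
    using BN(1) N by (auto simp: subspace_0)
  then have "Q x \<in> N" for x
    using vp.construct_in_span[OF B(2)] span_minimal[OF _ N] unfolding Q_def by blast
  moreover have "Q b = id b" if "b \<in> BN" for b
    using that B(1) by (auto simp: Q_def vp.construct_basis[OF B(2)])
  then have "Q x = id x" if "x \<in> N" for x
    using vp.linear_eq_on[OF lin linear_id] BN(3) that by blast
  ultimately show ?thesis
    using lin by auto
qed

locale pmod_seq =
  fixes sc :: "'k::field \<Rightarrow> 'v::ab_group_add \<Rightarrow> 'v"
    and U :: "nat \<Rightarrow> ('n::finite, 'v) pmod"
    and g :: "nat \<Rightarrow> real^'n \<Rightarrow> 'v \<Rightarrow> 'v"
  assumes vs: "vector_space sc"
    and pm: "\<And>j. is_pmod sc (U j)"
    and gm: "\<And>j. morph sc sc 0 (U j) (U (Suc j)) (g j)"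
begin

abbreviation "fs \<equiv> fun_scale sc"

lemma vector_space_fs: "vector_space fs"
  by (rule vector_space_fun_scale[OF vs])

lemmas zero_in_U = subspace_of_0[OF pmod_subspace[OF pm]]
  and add_in_U = subspace_of_add[OF pmod_subspace[OF pm]]
  and scale_in_U = subspace_of_scale[OF pmod_subspace[OF pm]]
  and diff_in_U = subspace_of_diff[OF vs pmod_subspace[OF pm]]
  and g_add = morph_add[OF gm]
  and g_scale = morph_scale[OF gm]
  and g_0 = morph_0[OF gm pm]

lemma g_in: "x \<in> sp (U j) s \<Longrightarrow> g j s x \<in> sp (U (Suc j)) s"
  using morph_in[OF gm] by fastforce

lemma g_natural: "s \<le> t \<Longrightarrow> x \<in> sp (U j) s \<Longrightarrow> g j t (mp (U j) s t x) = mp (U (Suc j)) s t (g j s x)"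
  using morph_natural[OF gm] by fastforce

lemma seq_trans_in: "x \<in> sp (U j) s \<Longrightarrow> seq_trans g j d s x \<in> sp (U (j + d)) s"
  by (induct d) (auto intro: g_in)

lemma seq_trans_add:
  "x \<in> sp (U j) s \<Longrightarrow> y \<in> sp (U j) s \<Longrightarrow>
    seq_trans g j d s (x + y) = seq_trans g j d s x + seq_trans g j d s y"
  by (induct d) (auto simp: g_add seq_trans_in)

lemma seq_trans_scale: "x \<in> sp (U j) s \<Longrightarrow> seq_trans g j d s (sc c x) = sc c (seq_trans g j d s x)"
  by (induct d) (auto simp: g_scale seq_trans_in)

lemma seq_trans_natural:
  "s \<le> t \<Longrightarrow> x \<in> sp (U j) s \<Longrightarrow>
    seq_trans g j d t (mp (U j) s t x) = mp (U (j + d)) s t (seq_trans g j d s x)"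
  by (induct d) (auto simp: g_natural seq_trans_in)

lemma seq_trans_Suc_start: "seq_trans g (Suc j) d s (g j s x) = seq_trans g j (Suc d) s x"
  by (induct d) auto

definition follows_from :: "(nat \<Rightarrow> 'v) \<Rightarrow> real^'n \<Rightarrow> nat \<Rightarrow> bool" where
  "follows_from y s m \<longleftrightarrow> (\<forall>i\<ge>m. y (Suc i) = g i s (y i))"

lemma follows_from_mono: "follows_from y s m \<Longrightarrow> m \<le> m' \<Longrightarrow> follows_from y s m'"
  by (simp add: follows_from_def)

lemma follows_from_agree:
  assumes "follows_from a s m" "follows_from b s m" "a m = b m" "m \<le> i"
  shows "a i = b i"
  using assms(4) by (induct i rule: dec_induct) (use assms(1-3) in \<open>auto simp: follows_from_def\<close>)

text \<open>The colimit at \<open>s\<close> is the space of threads modulo the null threads. As all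
  persistence modules live in a fixed ambient type, the quotient is realised as the image of
  the projection \<open>proj s\<close> along a retraction onto the null threads.\<close>

definition threads :: "real^'n \<Rightarrow> (nat \<Rightarrow> 'v) set" where
  "threads s = {y. (\<forall>i. y i \<in> sp (U i) s) \<and> (\<forall>\<^sub>F i in sequentially. y (Suc i) = g i s (y i))}"

definition null_threads :: "real^'n \<Rightarrow> (nat \<Rightarrow> 'v) set" where
  "null_threads s = {y. (\<forall>i. y i \<in> sp (U i) s) \<and> (\<forall>\<^sub>F i in sequentially. y i = 0)}"

lemma threads_in: "y \<in> threads s \<Longrightarrow> y i \<in> sp (U i) s"
  by (simp add: threads_def)

lemma threads_follow: "y \<in> threads s \<Longrightarrow> \<exists>m. follows_from y s m"
  by (simp add: threads_def eventually_sequentially follows_from_def)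

lemma subspace_threads: "subspace_of fs (threads s)"
  unfolding subspace_of_def threads_def
  by (auto simp: zero_in_U add_in_U scale_in_U g_0 g_add g_scale elim: eventually_elim2
    eventually_mono)

lemma subspace_null_threads: "subspace_of fs (null_threads s)"
  unfolding subspace_of_def null_threads_def
  by (auto simp: zero_in_U add_in_U scale_in_U scale_zero_right[OF vs] elim: eventually_elim2
    eventually_mono)

lemma null_threads_subset: "null_threads s \<subseteq> threads s"
proof
  fix y assume "y \<in> null_threads s"
  moreover from this have "\<forall>\<^sub>F i in sequentially. y (Suc i) = 0"
    by (simp add: null_threads_def eventually_sequentially_Suc[of "\<lambda>i. y i = 0"])
  ultimately show "y \<in> threads s"
    unfolding threads_def null_threads_def by (auto simp: g_0 elim: eventually_elim2)
qed

lemmas threads_add = subspace_of_add[OF subspace_threads]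
  and threads_diff = subspace_of_diff[OF vector_space_fs subspace_threads]
  and null_threads_minus_commute =
    subspace_of_minus_commute[OF vector_space_fs subspace_null_threads]

definition retraction :: "real^'n \<Rightarrow> (nat \<Rightarrow> 'v) \<Rightarrow> (nat \<Rightarrow> 'v)" where
  "retraction s = (SOME Q. Vector_Spaces.linear fs fs Q \<and> (\<forall>y. Q y \<in> null_threads s)
    \<and> (\<forall>y\<in>null_threads s. Q y = y))"

lemma retraction_spec:
  "Vector_Spaces.linear fs fs (retraction s) \<and> (\<forall>y. retraction s y \<in> null_threads s)
    \<and> (\<forall>y\<in>null_threads s. retraction s y = y)"
proof -
  have "\<exists>Q. Vector_Spaces.linear fs fs Q \<and> (\<forall>y. Q y \<in> null_threads s)
      \<and> (\<forall>y\<in>null_threads s. Q y = y)"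
    using exists_linear_retraction[OF vector_space_fs] subspace_null_threads
    by (simp add: subspace_of_iff_subspace[OF vector_space_fs])
  then show ?thesis
    unfolding retraction_def by (rule someI_ex)
qed

definition proj :: "real^'n \<Rightarrow> (nat \<Rightarrow> 'v) \<Rightarrow> (nat \<Rightarrow> 'v)" where
  "proj s y = y - retraction s y"

lemma proj_add: "proj s (y + z) = proj s y + proj s z"
  using retraction_spec[of s] by (simp add: proj_def Vector_Spaces.linear_iff)

lemma proj_scale: "proj s (fs c y) = fs c (proj s y)"
proof -
  interpret vector_space fs by (rule vector_space_fs)
  show ?thesis
    using retraction_spec[of s] by (simp add: proj_def Vector_Spaces.linear_iff
      scale_right_diff_distrib)
qed

lemma proj_diff: "proj s (y - z) = proj s y - proj s z"
  by (metis proj_add add_diff_cancel_right' diff_add_cancel)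

lemma proj_null: "y \<in> null_threads s \<Longrightarrow> proj s y = 0"
  using retraction_spec[of s] by (simp add: proj_def)

lemma proj_eqI: "y - z \<in> null_threads s \<Longrightarrow> proj s y = proj s z"
  using proj_null proj_diff by fastforce

lemma proj_residual: "y - proj s y \<in> null_threads s"
  using retraction_spec[of s] by (simp add: proj_def)

lemma proj_threads: "y \<in> threads s \<Longrightarrow> proj s y \<in> threads s"
  using retraction_spec[of s] null_threads_subset by (auto simp: proj_def intro: threads_diff)

lemma proj_idem: "proj s (proj s y) = proj s y"
  by (rule proj_eqI, rule null_threads_minus_commute, rule proj_residual)

definition mp_threads :: "real^'n \<Rightarrow> real^'n \<Rightarrow> (nat \<Rightarrow> 'v) \<Rightarrow> (nat \<Rightarrow> 'v)" where
  "mp_threads s t y = (\<lambda>i. mp (U i) s t (y i))"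

lemma mp_threads_threads: "s \<le> t \<Longrightarrow> y \<in> threads s \<Longrightarrow> mp_threads s t y \<in> threads t"
  unfolding threads_def mp_threads_def
  by (auto simp: pmod_mp_in[OF pm] g_natural elim: eventually_mono)

lemma mp_threads_null: "s \<le> t \<Longrightarrow> y \<in> null_threads s \<Longrightarrow> mp_threads s t y \<in> null_threads t"
  unfolding null_threads_def mp_threads_def
  by (auto simp: pmod_mp_in[OF pm] pmod_mp_0[OF pm] elim: eventually_mono)

lemma mp_threads_add:
  "s \<le> t \<Longrightarrow> y \<in> threads s \<Longrightarrow> z \<in> threads s \<Longrightarrow>
    mp_threads s t (y + z) = mp_threads s t y + mp_threads s t z"
  by (auto simp: mp_threads_def pmod_mp_add[OF pm] threads_in)

lemma mp_threads_scale: "s \<le> t \<Longrightarrow> y \<in> threads s \<Longrightarrow> mp_threads s t (fs c y) = fs c (mp_threads s t y)"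
  by (auto simp: mp_threads_def pmod_mp_scale[OF pm] threads_in)

lemma mp_threads_diff:
  "s \<le> t \<Longrightarrow> y \<in> threads s \<Longrightarrow> z \<in> threads s \<Longrightarrow>
    mp_threads s t (y - z) = mp_threads s t y - mp_threads s t z"
  using mp_threads_add[of s t "y - z" z] threads_diff by simp

lemma mp_threads_id: "y \<in> threads s \<Longrightarrow> mp_threads s s y = y"
  by (auto simp: mp_threads_def pmod_mp_id[OF pm] threads_in)

lemma mp_threads_comp:
  "s \<le> t \<Longrightarrow> t \<le> u \<Longrightarrow> y \<in> threads s \<Longrightarrow> mp_threads t u (mp_threads s t y) = mp_threads s u y"
  by (auto simp: mp_threads_def pmod_mp_comp[OF pm] threads_in)

lemma proj_mp_threads_proj:
  "s \<le> t \<Longrightarrow> y \<in> threads s \<Longrightarrow> proj t (mp_threads s t (proj s y)) = proj t (mp_threads s t y)"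
  using mp_threads_null[OF _ null_threads_minus_commute[OF proj_residual]]
  by (auto intro: proj_eqI simp flip: mp_threads_diff[OF _ proj_threads])

definition thread_from :: "nat \<Rightarrow> real^'n \<Rightarrow> 'v \<Rightarrow> (nat \<Rightarrow> 'v)" where
  "thread_from j s x = (\<lambda>i. if i < j then 0 else seq_trans g j (i - j) s x)"

lemma thread_from_in: "x \<in> sp (U j) s \<Longrightarrow> thread_from j s x i \<in> sp (U i) s"
  using seq_trans_in[of x j s "i - j"] by (auto simp: thread_from_def zero_in_U)

lemma thread_from_Suc: "j \<le> i \<Longrightarrow> thread_from j s x (Suc i) = g i s (thread_from j s x i)"
  by (auto simp: thread_from_def Suc_diff_le)

lemma thread_from_threads: "x \<in> sp (U j) s \<Longrightarrow> thread_from j s x \<in> threads s"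
  unfolding threads_def eventually_sequentially
  by (auto simp: thread_from_in intro!: exI[of _ j] thread_from_Suc)

lemma thread_from_add:
  "x \<in> sp (U j) s \<Longrightarrow> y \<in> sp (U j) s \<Longrightarrow>
    thread_from j s (x + y) = thread_from j s x + thread_from j s y"
  by (auto simp: thread_from_def seq_trans_add)

lemma thread_from_scale: "x \<in> sp (U j) s \<Longrightarrow> thread_from j s (sc c x) = fs c (thread_from j s x)"
  by (auto simp: thread_from_def fun_eq_iff seq_trans_scale scale_zero_right[OF vs])

lemma mp_threads_thread_from:
  "s \<le> t \<Longrightarrow> x \<in> sp (U j) s \<Longrightarrow> mp_threads s t (thread_from j s x) = thread_from j t (mp (U j) s t x)"
  by (auto simp: thread_from_def mp_threads_def seq_trans_natural pmod_mp_0[OF pm])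

lemma follows_from_thread_from: "j \<le> m \<Longrightarrow> follows_from (thread_from j s x) s m"
  by (simp add: follows_from_def thread_from_Suc)

lemma thread_from_eq: "follows_from y s m \<Longrightarrow> m \<le> i \<Longrightarrow> thread_from m s (y m) i = y i"
  by (rule follows_from_agree[OF follows_from_thread_from]) (simp_all add: thread_from_def)

definition colim :: "('n, nat \<Rightarrow> 'v) pmod" where
  "colim = \<lparr>sp = (\<lambda>s. proj s ` threads s), mp = (\<lambda>s t y. proj t (mp_threads s t y))\<rparr>"

definition colim_map :: "nat \<Rightarrow> real^'n \<Rightarrow> 'v \<Rightarrow> (nat \<Rightarrow> 'v)" where
  "colim_map j s x = proj s (thread_from j s x)"

lemma sp_colim: "sp colim s = proj s ` threads s"
  by (simp add: colim_def)

lemma mp_colim: "mp colim s t y = proj t (mp_threads s t y)"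
  by (simp add: colim_def)

lemma colim_threads: "y \<in> sp colim s \<Longrightarrow> y \<in> threads s"
  using proj_threads by (auto simp: sp_colim)

lemma proj_colim: "y \<in> sp colim s \<Longrightarrow> proj s y = y"
  using proj_idem by (auto simp: sp_colim)

lemma subspace_colim: "subspace_of fs (sp colim s)"
  unfolding subspace_of_def sp_colim
proof (intro conjI ballI allI)
  show "0 \<in> proj s ` threads s"
    using subspace_of_0[OF subspace_threads] proj_diff[of s 0 0] by (metis diff_self image_eqI)
next
  fix x y assume "x \<in> proj s ` threads s" "y \<in> proj s ` threads s"
  then show "x + y \<in> proj s ` threads s"
    by (auto simp flip: proj_add intro: threads_add)
next
  fix c x assume "x \<in> proj s ` threads s"
  then show "fs c x \<in> proj s ` threads s"
    by (auto simp flip: proj_scale intro: subspace_of_scale[OF subspace_threads])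
qed

lemma is_pmod_colim: "is_pmod fs colim"
  unfolding is_pmod_def
proof (intro conjI allI impI ballI)
  show "subspace_of fs (sp colim s)" for s
    by (rule subspace_colim)
next
  fix s t :: "real^'n" assume st: "s \<le> t"
  show "lin_on fs fs (sp colim s) (sp colim t) (mp colim s t)"
    unfolding lin_on_def mp_colim
  proof (intro conjI ballI allI)
    fix x y assume x: "x \<in> sp colim s" and y: "y \<in> sp colim s"
    show "proj t (mp_threads s t x) \<in> sp colim t"
      using mp_threads_threads[OF st colim_threads[OF x]] by (simp add: sp_colim)
    show "proj t (mp_threads s t (x + y)) = proj t (mp_threads s t x) + proj t (mp_threads s t y)"
      using mp_threads_add[OF st colim_threads[OF x] colim_threads[OF y]] by (simp add: proj_add)
  next
    fix c x assume x: "x \<in> sp colim s"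
    show "proj t (mp_threads s t (fs c x)) = fs c (proj t (mp_threads s t x))"
      using mp_threads_scale[OF st colim_threads[OF x]] by (simp add: proj_scale)
  qed
next
  fix s x assume "x \<in> sp colim s"
  then show "mp colim s s x = x"
    by (simp add: mp_colim mp_threads_id colim_threads proj_colim)
next
  fix s t u x assume st: "s \<le> t" and tu: "t \<le> u" and x: "x \<in> sp colim s"
  have "proj u (mp_threads t u (proj t (mp_threads s t x)))
      = proj u (mp_threads t u (mp_threads s t x))"
    by (rule proj_mp_threads_proj[OF tu mp_threads_threads[OF st colim_threads[OF x]]])
  also have "\<dots> = proj u (mp_threads s u x)"
    by (simp add: mp_threads_comp[OF st tu colim_threads[OF x]])
  finally show "mp colim t u (mp colim s t x) = mp colim s u x"
    by (simp add: mp_colim)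
qed

lemma colim_map_morph: "morph sc fs 0 (U j) colim (colim_map j)"
  unfolding morph_def lin_on_def
proof (intro conjI allI impI ballI)
  fix s x y assume x: "x \<in> sp (U j) s" and y: "y \<in> sp (U j) s"
  show "colim_map j s x \<in> sp colim (sh 0 s)"
    using thread_from_threads[OF x] by (simp add: colim_map_def sp_colim)
  show "colim_map j s (x + y) = colim_map j s x + colim_map j s y"
    by (simp add: colim_map_def thread_from_add[OF x y] proj_add)
  show "colim_map j s (sc c x) = fs c (colim_map j s x)" for c
    by (simp add: colim_map_def thread_from_scale[OF x] proj_scale)
next
  fix s t x assume st: "s \<le> t" and x: "x \<in> sp (U j) s"
  have "mp colim s t (colim_map j s x) = proj t (mp_threads s t (thread_from j s x))"
    unfolding colim_map_def mp_colim by (rule proj_mp_threads_proj[OF st thread_from_threads[OF x]])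
  then show "colim_map j t (mp (U j) s t x) = mp colim (sh 0 s) (sh 0 t) (colim_map j s x)"
    by (simp add: mp_threads_thread_from[OF st x] colim_map_def)
qed

lemma thread_from_Suc_start:
  "Suc j \<le> i \<Longrightarrow> thread_from (Suc j) s (g j s x) i = thread_from j s x i"
proof -
  assume "Suc j \<le> i"
  then have "thread_from (Suc j) s (g j s x) i = seq_trans g j (Suc (i - Suc j)) s x"
    by (simp add: thread_from_def seq_trans_Suc_start del: seq_trans.simps)
  also have "\<dots> = thread_from j s x i"
    using \<open>Suc j \<le> i\<close> by (simp add: thread_from_def Suc_diff_Suc del: seq_trans.simps)
  finally show ?thesis .
qed

lemma colim_map_Suc: "x \<in> sp (U j) s \<Longrightarrow> colim_map (Suc j) s (g j s x) = colim_map j s x"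
  unfolding colim_map_def
  by (rule proj_eqI) (auto simp: null_threads_def eventually_sequentially thread_from_Suc_start
      intro!: diff_in_U thread_from_in g_in exI[of _ "Suc j"])

lemma colim_map_surj:
  assumes y: "y \<in> sp colim s"
  shows "\<exists>j. \<exists>x\<in>sp (U j) s. colim_map j s x = y"
proof -
  obtain m where m: "follows_from y s m"
    using threads_follow colim_threads[OF y] by blast
  have "thread_from m s (y m) - y \<in> null_threads s"
    unfolding null_threads_def eventually_sequentially
    using thread_from_eq[OF m] diff_in_U[OF thread_from_in threads_in] colim_threads[OF y]
      threads_in
    by auto
  then have "colim_map m s (y m) = y"
    unfolding colim_map_def using proj_eqI proj_colim[OF y] by metis
  then show ?thesis
    using threads_in[OF colim_threads[OF y]] by blast
qed

lemma colim_map_eq_0: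
  assumes "colim_map j s x = 0"
  shows "\<exists>d. seq_trans g j d s x = 0"
proof -
  have "thread_from j s x \<in> null_threads s"
    using proj_residual[of "thread_from j s x" s] assms by (simp add: colim_map_def)
  then obtain m where "\<forall>i\<ge>m. thread_from j s x i = 0"
    by (auto simp: null_threads_def eventually_sequentially)
  then have "seq_trans g j (max m j - j) s x = 0"
    by (metis max.cobounded1 max.cobounded2 not_le thread_from_def)
  then show ?thesis ..
qed

lemma is_seq_colim_colim: "is_seq_colim sc fs U g colim colim_map"
  unfolding is_seq_colim_def
  using gm colim_map_morph colim_map_Suc colim_map_surj colim_map_eq_0 by blast

end

section \<open>Maps out of the colimit\<close>

locale pmod_seq_back = pmod_seq sc U g
  for sc :: "'k::field \<Rightarrow> 'v::ab_group_add \<Rightarrow> 'v"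
    and U :: "nat \<Rightarrow> ('n::finite, 'v) pmod"
    and g :: "nat \<Rightarrow> real^'n \<Rightarrow> 'v \<Rightarrow> 'v" +
  fixes k :: "nat \<Rightarrow> real^'n \<Rightarrow> 'v \<Rightarrow> 'v" and \<delta> :: "nat \<Rightarrow> real" and j0 :: nat and R :: real
  assumes \<delta>_nonneg: "\<And>j. 0 \<le> \<delta> j"
    and k_morph: "\<And>j. morph sc sc (\<delta> j) (U (Suc j)) (U j) (k j)"
    and k_g: "\<And>j s x. x \<in> sp (U j) s \<Longrightarrow> k j s (g j s x) = mp (U j) s (sh (\<delta> j) s) x"
    and g_k: "\<And>j s y. y \<in> sp (U (Suc j)) s \<Longrightarrow>
      g j (sh (\<delta> j) s) (k j s y) = mp (U (Suc j)) s (sh (\<delta> j) s) y"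
    and partial_sums_le: "\<And>d. (\<Sum>i<d. \<delta> (j0 + i)) \<le> R"
begin

definition back_shift :: "nat \<Rightarrow> real" where
  "back_shift d = (\<Sum>i<d. \<delta> (j0 + i))"

lemma back_shift_0 [simp]: "back_shift 0 = 0"
  by (simp add: back_shift_def)

lemma back_shift_Suc: "back_shift (Suc d) = \<delta> (j0 + d) + back_shift d"
  by (simp add: back_shift_def)

lemma back_shift_nonneg: "0 \<le> back_shift d"
  unfolding back_shift_def by (rule sum_nonneg) (simp add: \<delta>_nonneg)

lemma sh_back_shift_le: "sh (back_shift d) s \<le> sh R s"
  using partial_sums_le by (simp add: back_shift_def sh_le_sh)

lemma sh_back_shift_mono: "d \<le> d' \<Longrightarrow> sh (back_shift d) s \<le> sh (back_shift d') s"
  unfolding back_shift_def by (intro sh_le_sh sum_mono2) (auto simp: \<delta>_nonneg)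

lemma R_nonneg: "0 \<le> R"
  using back_shift_nonneg partial_sums_le by (metis back_shift_def order_trans)

primrec back_trans :: "nat \<Rightarrow> real^'n \<Rightarrow> 'v \<Rightarrow> 'v" where
  "back_trans 0 s z = z"
| "back_trans (Suc d) s z = back_trans d (sh (\<delta> (j0 + d)) s) (k (j0 + d) s z)"

lemma back_trans_in: "z \<in> sp (U (j0 + d)) s \<Longrightarrow> back_trans d s z \<in> sp (U j0) (sh (back_shift d) s)"
proof (induct d arbitrary: s z)
  case (Suc d)
  then show ?case
    using Suc.hyps[OF morph_in[OF k_morph]] by (simp add: back_shift_Suc)
qed simp

lemma back_trans_add:
  "z \<in> sp (U (j0 + d)) s \<Longrightarrow> w \<in> sp (U (j0 + d)) s \<Longrightarrow>
    back_trans d s (z + w) = back_trans d s z + back_trans d s w"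
proof (induct d arbitrary: s z w)
  case (Suc d)
  then show ?case
    using Suc.hyps[OF morph_in[OF k_morph] morph_in[OF k_morph]] morph_add[OF k_morph] by simp
qed simp

lemma back_trans_scale: "z \<in> sp (U (j0 + d)) s \<Longrightarrow> back_trans d s (sc c z) = sc c (back_trans d s z)"
proof (induct d arbitrary: s z)
  case (Suc d)
  then show ?case
    using Suc.hyps[OF morph_in[OF k_morph]] morph_scale[OF k_morph] by simp
qed simp

lemma back_trans_0: "back_trans d s 0 = 0"
  by (induct d arbitrary: s) (simp_all add: morph_0[OF k_morph pm])

lemma back_trans_natural:
  "s \<le> t \<Longrightarrow> z \<in> sp (U (j0 + d)) s \<Longrightarrow>
    back_trans d t (mp (U (j0 + d)) s t z) = mp (U j0) (sh (back_shift d) s) (sh (back_shift d) t)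
      (back_trans d s z)"
proof (induct d arbitrary: s t z)
  case (Suc d)
  then show ?case
    using morph_natural[OF k_morph, of s t z "j0 + d"]
      Suc.hyps[OF sh_mono[OF Suc.prems(1)] morph_in[OF k_morph]]
    by (simp add: back_shift_Suc)
qed (simp add: pmod_mp_id[OF pm])

lemma seq_trans_back_trans:
  "z \<in> sp (U (j0 + d)) s \<Longrightarrow>
    seq_trans g j0 d (sh (back_shift d) s) (back_trans d s z) = mp (U (j0 + d)) s (sh (back_shift
      d) s) z"
proof (induct d arbitrary: s z)
  case 0
  then show ?case by (simp add: pmod_mp_id[OF pm])
next
  case (Suc d)
  let ?s' = "sh (\<delta> (j0 + d)) s"
  let ?t = "sh (back_shift (Suc d)) s"
  have z: "z \<in> sp (U (Suc (j0 + d))) s"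
    using Suc.prems by simp
  have kz: "k (j0 + d) s z \<in> sp (U (j0 + d)) ?s'"
    by (rule morph_in[OF k_morph z])
  have t: "sh (back_shift d) ?s' = ?t"
    by (simp add: back_shift_Suc)
  have le1: "s \<le> ?s'"
    by (rule le_sh[OF \<delta>_nonneg])
  have le2: "?s' \<le> ?t"
    using le_sh[OF back_shift_nonneg] t by metis
  have "seq_trans g j0 (Suc d) ?t (back_trans (Suc d) s z)
      = g (j0 + d) ?t (mp (U (j0 + d)) ?s' ?t (k (j0 + d) s z))"
    using Suc.hyps[OF kz] t by simp
  also have "\<dots> = mp (U (Suc (j0 + d))) ?s' ?t (g (j0 + d) ?s' (k (j0 + d) s z))"
    by (rule g_natural[OF le2 kz])
  also have "\<dots> = mp (U (Suc (j0 + d))) s ?t z"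
    using g_k[OF z] pmod_mp_comp[OF pm le1 le2 z] by simp
  finally show ?case by simp
qed

definition back_at :: "nat \<Rightarrow> real^'n \<Rightarrow> (nat \<Rightarrow> 'v) \<Rightarrow> 'v" where
  "back_at d s y = mp (U j0) (sh (back_shift d) s) (sh R s) (back_trans d s (y (j0 + d)))"

text \<open>By \<open>back_at_eq\<close>, every \<open>d\<close> from which \<open>y\<close> follows the transition maps gives the
  same value, so the choice below is immaterial.\<close>

definition colim_back :: "real^'n \<Rightarrow> (nat \<Rightarrow> 'v) \<Rightarrow> 'v" where
  "colim_back s y = back_at (SOME d. follows_from y s (j0 + d)) s y"

lemma threads_follow_from_j0: "y \<in> threads s \<Longrightarrow> \<exists>d. follows_from y s (j0 + d)"
  using threads_follow follows_from_mono le_add2 by blast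

lemma back_at_in: "y \<in> threads s \<Longrightarrow> back_at d s y \<in> sp (U j0) (sh R s)"
  unfolding back_at_def by (rule pmod_mp_in[OF pm sh_back_shift_le back_trans_in[OF threads_in]])

lemma back_at_Suc:
  assumes y: "y \<in> threads s" and "follows_from y s (j0 + d)"
  shows "back_at (Suc d) s y = back_at d s y"
proof -
  let ?s' = "sh (\<delta> (j0 + d)) s"
  have yd: "y (j0 + d) \<in> sp (U (j0 + d)) s"
    by (rule threads_in[OF y])
  have "y (j0 + Suc d) = g (j0 + d) s (y (j0 + d))"
    using assms(2) by (simp add: follows_from_def)
  then have "back_trans (Suc d) s (y (j0 + Suc d))
      = back_trans d ?s' (mp (U (j0 + d)) s ?s' (y (j0 + d)))"
    using k_g[OF yd] by simp
  also have "\<dots>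
      = mp (U j0) (sh (back_shift d) s) (sh (back_shift (Suc d)) s) (back_trans d s (y (j0 + d)))"
    using back_trans_natural[OF le_sh[OF \<delta>_nonneg] yd] by (simp add: back_shift_Suc)
  moreover have "sh (back_shift d) s \<le> sh (back_shift (Suc d)) s"
    by (rule sh_back_shift_mono) simp
  ultimately show ?thesis
    unfolding back_at_def using pmod_mp_comp[OF pm _ sh_back_shift_le back_trans_in[OF yd]] by metis
qed

lemma back_at_eq:
  assumes y: "y \<in> threads s" and "follows_from y s (j0 + d)" and "d \<le> d'"
  shows "back_at d' s y = back_at d s y"
  using assms(3)
proof (induct d' rule: dec_induct)
  case (step d')
  have "follows_from y s (j0 + d')"
    using follows_from_mono[OF assms(2), of "j0 + d'"] step(1) by simp
  then show ?case
    using back_at_Suc[OF y] step(3) by simp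
qed simp

lemma colim_back_eq:
  assumes y: "y \<in> threads s" and d: "follows_from y s (j0 + d)"
  shows "colim_back s y = back_at d s y"
proof -
  define d' where "d' = (SOME d. follows_from y s (j0 + d))"
  have d': "follows_from y s (j0 + d')"
    unfolding d'_def using threads_follow_from_j0[OF y] by (rule someI_ex)
  have "back_at (max d d') s y = back_at d' s y" "back_at (max d d') s y = back_at d s y"
    by (rule back_at_eq[OF y d'], simp) (rule back_at_eq[OF y d], simp)
  then show ?thesis
    unfolding colim_back_def d'_def[symmetric] by simp
qed

lemma back_at_add:
  "y \<in> threads s \<Longrightarrow> z \<in> threads s \<Longrightarrow> back_at d s (y + z) = back_at d s y + back_at d s z"
  unfolding back_at_def
  by (simp add: back_trans_add threads_in pmod_mp_add[OF pm sh_back_shift_le] back_trans_in)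

lemma back_at_scale: "y \<in> threads s \<Longrightarrow> back_at d s (fs c y) = sc c (back_at d s y)"
  unfolding back_at_def
  by (simp add: back_trans_scale threads_in pmod_mp_scale[OF pm sh_back_shift_le] back_trans_in)

lemma colim_back_in: "y \<in> threads s \<Longrightarrow> colim_back s y \<in> sp (U j0) (sh R s)"
  using threads_follow_from_j0 colim_back_eq back_at_in by metis

lemma colim_back_add:
  assumes y: "y \<in> threads s" and z: "z \<in> threads s"
  shows "colim_back s (y + z) = colim_back s y + colim_back s z"
proof -
  obtain d1 d2 where "follows_from y s (j0 + d1)" "follows_from z s (j0 + d2)"
    using threads_follow_from_j0[OF y] threads_follow_from_j0[OF z] by blast
  then have "follows_from y s (j0 + max d1 d2)" "follows_from z s (j0 + max d1 d2)"
    by (auto elim: follows_from_mono)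
  moreover from this have "follows_from (y + z) s (j0 + max d1 d2)"
    using threads_in[OF y] threads_in[OF z] by (simp add: follows_from_def g_add)
  ultimately show ?thesis
    using colim_back_eq threads_add[OF y z] y z by (simp add: back_at_add)
qed

lemma colim_back_scale:
  assumes y: "y \<in> threads s"
  shows "colim_back s (fs c y) = sc c (colim_back s y)"
proof -
  obtain d where d: "follows_from y s (j0 + d)"
    using threads_follow_from_j0[OF y] by blast
  then have "follows_from (fs c y) s (j0 + d)"
    using threads_in[OF y] by (simp add: follows_from_def g_scale)
  then show ?thesis
    using colim_back_eq[OF _ d] colim_back_eq subspace_of_scale[OF subspace_threads y] y
    by (simp add: back_at_scale)
qed

lemma colim_back_null:
  assumes y: "y \<in> null_threads s"
  shows "colim_back s y = 0"
proof -
  have yT: "y \<in> threads s"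
    using y null_threads_subset by blast
  obtain d where "follows_from y s (j0 + d)"
    using threads_follow_from_j0[OF yT] by blast
  moreover obtain m where "\<forall>i\<ge>m. y i = 0"
    using y by (auto simp: null_threads_def eventually_sequentially)
  ultimately have "follows_from y s (j0 + (d + m))" "y (j0 + (d + m)) = 0"
    by (auto elim: follows_from_mono)
  then show ?thesis
    using colim_back_eq[OF yT] by (simp add: back_at_def back_trans_0 pmod_mp_0[OF pm
      sh_back_shift_le])
qed

lemma colim_back_proj:
  assumes y: "y \<in> threads s"
  shows "colim_back s (proj s y) = colim_back s y"
proof -
  have "y - proj s y \<in> threads s"
    using proj_residual null_threads_subset by blast
  then have "colim_back s y = colim_back s (proj s y) + colim_back s (y - proj s y)"
    using colim_back_add[OF proj_threads[OF y]] by (metis add.commute diff_add_cancel)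
  then show ?thesis
    using colim_back_null[OF proj_residual] by simp
qed

lemma colim_back_morph: "morph fs sc R colim (U j0) colim_back"
  unfolding morph_def
proof (intro conjI allI impI ballI)
  fix s
  show "lin_on fs sc (sp colim s) (sp (U j0) (sh R s)) (colim_back s)"
    unfolding lin_on_def using colim_back_in colim_back_add colim_back_scale colim_threads by blast
next
  fix s t :: "real^'n" and y assume st: "s \<le> t" and "y \<in> sp colim s"
  then have y: "y \<in> threads s"
    by (simp add: colim_threads)
  obtain d where d: "follows_from y s (j0 + d)"
    using threads_follow_from_j0[OF y] by blast
  have My: "mp_threads s t y \<in> threads t"
    by (rule mp_threads_threads[OF st y])
  have dM: "follows_from (mp_threads s t y) t (j0 + d)"
    using d g_natural[OF st threads_in[OF y]] by (simp add: follows_from_def mp_threads_def)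
  have yd: "y (j0 + d) \<in> sp (U (j0 + d)) s"
    by (rule threads_in[OF y])
  let ?b = "back_trans d s (y (j0 + d))"
  have "colim_back t (mp colim s t y) = back_at d t (mp_threads s t y)"
    using colim_back_proj[OF My] colim_back_eq[OF My dM] by (simp add: mp_colim)
  also have "\<dots>
      = mp (U j0) (sh (back_shift d) t) (sh R t) (mp (U j0) (sh (back_shift d) s) (sh (back_shift d) t) ?b)"
    using back_trans_natural[OF st yd] by (simp add: back_at_def mp_threads_def)
  also have "\<dots> = mp (U j0) (sh (back_shift d) s) (sh R t) ?b"
    by (rule pmod_mp_comp[OF pm sh_mono[OF st] sh_back_shift_le back_trans_in[OF yd]])
  also have "\<dots> = mp (U j0) (sh R s) (sh R t) (mp (U j0) (sh (back_shift d) s) (sh R s) ?b)"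
    by (rule pmod_mp_comp[OF pm sh_back_shift_le sh_mono[OF st] back_trans_in[OF yd], symmetric])
  also have "\<dots> = mp (U j0) (sh R s) (sh R t) (colim_back s y)"
    using colim_back_eq[OF y d] by (simp add: back_at_def)
  finally show "colim_back t (mp colim s t y) = mp (U j0) (sh R s) (sh R t) (colim_back s y)" .
qed

lemma colim_back_colim_map:
  assumes x: "x \<in> sp (U j0) s"
  shows "colim_back s (colim_map j0 s x) = mp (U j0) s (sh R s) x"
proof -
  have "colim_back s (colim_map j0 s x) = back_at 0 s (thread_from j0 s x)"
    unfolding colim_map_def
    by (simp add: colim_back_proj thread_from_threads[OF x] colim_back_eq follows_from_thread_from)
  then show ?thesis
    by (simp add: back_at_def thread_from_def)
qed

lemma thread_from_colim_back:
  assumes y: "y \<in> threads s" and d: "follows_from y s (j0 + d)"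
  shows "thread_from j0 (sh R s) (colim_back s y) (j0 + d) = mp_threads s (sh R s) y (j0 + d)"
proof -
  let ?t = "sh R s" and ?D = "sh (back_shift d) s"
  have yd: "y (j0 + d) \<in> sp (U (j0 + d)) s"
    by (rule threads_in[OF y])
  have "thread_from j0 ?t (colim_back s y) (j0 + d)
      = seq_trans g j0 d ?t (mp (U j0) ?D ?t (back_trans d s (y (j0 + d))))"
    using colim_back_eq[OF y d] by (simp add: thread_from_def back_at_def)
  also have "\<dots> = mp (U (j0 + d)) ?D ?t (seq_trans g j0 d ?D (back_trans d s (y (j0 + d))))"
    by (rule seq_trans_natural[OF sh_back_shift_le back_trans_in[OF yd]])
  also have "\<dots> = mp (U (j0 + d)) s ?t (y (j0 + d))"
    using seq_trans_back_trans[OF yd] pmod_mp_comp[OF pm le_sh[OF back_shift_nonneg]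
      sh_back_shift_le yd]
    by simp
  finally show ?thesis
    by (simp add: mp_threads_def)
qed

lemma colim_map_colim_back:
  assumes "y \<in> sp colim s"
  shows "colim_map j0 (sh R s) (colim_back s y) = mp colim s (sh R s) y"
proof -
  let ?t = "sh R s"
  have y: "y \<in> threads s"
    using assms by (rule colim_threads)
  obtain d where d: "follows_from y s (j0 + d)"
    using threads_follow_from_j0[OF y] by blast
  have st: "s \<le> ?t"
    by (rule le_sh[OF R_nonneg])
  have "follows_from (mp_threads s ?t y) ?t (j0 + d)"
    using d g_natural[OF st threads_in[OF y]] by (simp add: follows_from_def mp_threads_def)
  moreover have "follows_from (thread_from j0 ?t (colim_back s y)) ?t (j0 + d)"
    by (rule follows_from_thread_from) simp
  ultimately have "thread_from j0 ?t (colim_back s y) i = mp_threads s ?t y i" if "j0 + d \<le> i" for i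
    using follows_from_agree thread_from_colim_back[OF y d] that by blast
  then have "thread_from j0 ?t (colim_back s y) - mp_threads s ?t y \<in> null_threads ?t"
    unfolding null_threads_def eventually_sequentially
    using diff_in_U[OF thread_from_in[OF colim_back_in[OF y]] threads_in[OF mp_threads_threads[OF
      st y]]]
    by auto
  then show ?thesis
    unfolding colim_map_def mp_colim by (rule proj_eqI)
qed

lemma interleaving_colim:
  assumes W: "U j0 = shift_pmod (-r) W" and R: "R = 2 * r"
  shows "interleaving sc fs r W colim (\<lambda>s. colim_map j0 (sh r s)) colim_back"
proof -
  have "0 \<le> r"
    using R_nonneg R by simp
  then show ?thesis
    using colim_map_morph[of j0] colim_back_morph colim_back_colim_map colim_map_colim_back
    unfolding W R by (rule interleaving_rebalance)
qed

end

section \<open>Completeness of the interleaving distance\<close>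

lemma suminf_offset_Suc:
  fixes f :: "nat \<Rightarrow> 'a::real_normed_vector"
  shows "summable f \<Longrightarrow> (\<Sum>i. f (i + j)) = f j + (\<Sum>i. f (i + Suc j))"
  using suminf_split_head[OF summable_ignore_initial_segment, of f j] by simp

lemma seq_colim_of_interleavings:
  fixes sc :: "'k::field \<Rightarrow> 'v::ab_group_add \<Rightarrow> 'v" and W :: "nat \<Rightarrow> ('n::finite, 'v) pmod"
  assumes vs: "vector_space sc" and W: "\<And>j. is_pmod sc (W j)"
    and fh: "\<And>j. interleaving sc sc (\<epsilon> j) (W j) (W (Suc j)) (f j) (h j)"
    and \<epsilon>: "summable \<epsilon>"
  defines "c \<equiv> \<lambda>j. - (\<Sum>i. \<epsilon> (i + j))"
  shows "\<exists>V \<iota>. is_pmod (fun_scale sc) V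
    \<and> is_seq_colim sc (fun_scale sc) (\<lambda>j. shift_pmod (c j) (W j)) (\<lambda>j s. f j (sh (c j) s)) V \<iota>
    \<and> (\<forall>j. interleaved sc (fun_scale sc) (- c j) (W j) V)"
proof -
  have \<epsilon>_nonneg: "0 \<le> \<epsilon> j" for j
    using fh by (simp add: interleaving_def)
  have c_Suc: "c (Suc j) = c j + \<epsilon> j" for j
    using suminf_offset_Suc[OF \<epsilon>, of j] unfolding c_def by linarith
  have c_add: "c (j0 + d) = c j0 + (\<Sum>i<d. \<epsilon> (j0 + i))" for j0 d
    by (induct d) (simp_all add: c_Suc)
  have c_nonpos: "c j \<le> 0" for j
    using suminf_nonneg[OF summable_ignore_initial_segment[OF \<epsilon>]] \<epsilon>_nonneg by (simp add: c_def)
  define U where "U = (\<lambda>j. shift_pmod (c j) (W j))"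
  define g where "g = (\<lambda>j s. f j (sh (c j) s))"
  define k where "k = (\<lambda>j s. h j (sh (c (Suc j)) s))"
  note shifted = interleaving_shifted_maps[OF fh c_Suc]
  interpret pmod_seq sc U g
    by (rule pmod_seq.intro) (use vs W shifted(1) in \<open>simp_all add: U_def g_def is_pmod_shift_pmod\<close>)
  have "interleaved sc fs (- c j0) (W j0) colim" for j0
  proof -
    interpret pmod_seq_back sc U g k "\<lambda>j. 2 * \<epsilon> j" j0 "2 * - c j0"
    proof
      show "(\<Sum>i<d. 2 * \<epsilon> (j0 + i)) \<le> 2 * - c j0" for d
        using c_add[of j0 d] c_nonpos[of "j0 + d"] by (simp add: sum_distrib_left[symmetric])
    qed (use \<epsilon>_nonneg shifted(2-4) in \<open>simp_all add: U_def g_def k_def\<close>)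
    have "interleaving sc fs (- c j0) (W j0) colim (\<lambda>s. colim_map j0 (sh (- c j0) s)) colim_back"
      by (rule interleaving_colim) (simp_all add: U_def)
    then show ?thesis
      unfolding interleaved_def by blast
  qed
  then show ?thesis
    using is_pmod_colim is_seq_colim_colim unfolding U_def g_def by blast
qed

lemma cauchy_subseq_geometric:
  fixes d :: "nat \<Rightarrow> nat \<Rightarrow> ereal"
  assumes cauchy: "\<And>e. e > 0 \<Longrightarrow> \<exists>N. \<forall>k\<ge>N. \<forall>m\<ge>N. d k m < ereal e"
  obtains \<phi> where "strict_mono \<phi>" "\<And>j. d (\<phi> j) (\<phi> (Suc j)) < ereal ((1/2)^j)"
proof -
  let ?P = "\<lambda>j N. \<forall>k\<ge>N. \<forall>m\<ge>N. d k m < ereal ((1/2)^j)"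
  have "\<exists>\<phi>. \<forall>j. ?P j (\<phi> j) \<and> \<phi> j < \<phi> (Suc j)"
  proof (rule dependent_nat_choice)
    show "\<exists>N. ?P 0 N"
      using cauchy[of 1] by simp
  next
    fix N j
    obtain N' where "?P (Suc j) N'"
      using cauchy[of "(1/2)^Suc j"] by auto
    then show "\<exists>N''. ?P (Suc j) N'' \<and> N < N''"
      by (intro exI[of _ "max N' (Suc N)"]) auto
  qed
  then obtain \<phi> where P: "\<And>j. ?P j (\<phi> j)" and incr: "\<And>j. \<phi> j < \<phi> (Suc j)"
    by blast
  show ?thesis
  proof (rule that)
    show "strict_mono \<phi>"
      using incr by (simp add: strict_mono_Suc_iff)
    show "d (\<phi> j) (\<phi> (Suc j)) < ereal ((1/2)^j)" for j
      using P[of j] incr[of j] by simp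
  qed
qed

lemma dI_cauchy_interleaved_subseq:
  fixes sc :: "'k::field \<Rightarrow> 'v::ab_group_add \<Rightarrow> 'v" and Vs :: "nat \<Rightarrow> ('n::finite, 'v) pmod"
  assumes "\<And>e. e > 0 \<Longrightarrow> \<exists>N. \<forall>k\<ge>N. \<forall>m\<ge>N. dI sc sc (Vs k) (Vs m) < ereal e"
  obtains \<phi> \<epsilon> f h where "strict_mono \<phi>" "summable \<epsilon>"
    "\<And>j. interleaving sc sc (\<epsilon> j) (Vs (\<phi> j)) (Vs (\<phi> (Suc j))) (f j) (h j)"
proof -
  obtain \<phi> where \<phi>: "strict_mono \<phi>"
    and close: "\<And>j. dI sc sc (Vs (\<phi> j)) (Vs (\<phi> (Suc j))) < ereal ((1/2)^j)"
    using cauchy_subseq_geometric[of "\<lambda>k m. dI sc sc (Vs k) (Vs m)"] assms by blast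
  have "\<exists>\<epsilon> f h. \<epsilon> < (1/2)^j \<and> interleaving sc sc \<epsilon> (Vs (\<phi> j)) (Vs (\<phi> (Suc j))) f h" for j
    using dI_lessE[OF close[of j]] unfolding interleaved_def by blast
  then obtain \<epsilon> f h where \<epsilon>: "\<And>j. \<epsilon> j < (1/2)^j"
    and fh: "\<And>j. interleaving sc sc (\<epsilon> j) (Vs (\<phi> j)) (Vs (\<phi> (Suc j))) (f j) (h j)"
    by metis
  have "summable \<epsilon>"
    using fh \<epsilon> by (intro summable_comparison_test'[OF summable_geometric[of "1/2"]])
      (auto simp: interleaving_def less_imp_le)
  with \<phi> fh show ?thesis
    using that by blast
qed

lemma dI_tendsto_0_of_subseq:
  fixes sc :: "'k::field \<Rightarrow> 'v::ab_group_add \<Rightarrow> 'v" and sc' :: "'k \<Rightarrow> 'w::ab_group_add \<Rightarrow> 'w"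
    and Vs :: "nat \<Rightarrow> ('n::finite, 'v) pmod" and V :: "('n, 'w) pmod"
  assumes Vs: "\<And>k. is_pmod sc (Vs k)" and V: "is_pmod sc' V"
    and cauchy: "\<And>e. e > 0 \<Longrightarrow> \<exists>N. \<forall>k\<ge>N. \<forall>m\<ge>N. dI sc sc (Vs k) (Vs m) < ereal e"
    and \<phi>: "strict_mono \<phi>" and r: "r \<longlonglongrightarrow> 0"
    and interleaved: "\<And>j. interleaved sc sc' (r j) (Vs (\<phi> j)) V"
  shows "(\<lambda>k. dI sc sc' (Vs k) V) \<longlonglongrightarrow> 0"
proof (rule tendsto_zero_erealI)
  fix e :: real assume "e > 0"
  then obtain N where N: "\<forall>k\<ge>N. \<forall>m\<ge>N. dI sc sc (Vs k) (Vs m) < ereal (e/2)"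
    using cauchy[of "e/2"] by auto
  have "\<forall>\<^sub>F j in sequentially. r j < e/2 \<and> N \<le> j"
    using order_tendstoD(2)[OF r, of "e/2"] \<open>e > 0\<close> eventually_ge_at_top[of N]
    by (auto intro: eventually_conj)
  then obtain j where j: "r j < e/2" "N \<le> j"
    by (auto simp: eventually_sequentially)
  have "N \<le> \<phi> j"
    using j(2) seq_suble[OF \<phi>, of j] by simp
  have "dI sc sc' (Vs (\<phi> j)) V \<le> ereal (r j)"
    by (rule dI_le[OF interleaved])
  also have "\<dots> < ereal (e/2)"
    using j(1) by simp
  finally have "dI sc sc' (Vs k) V < ereal (e/2 + e/2)" if "N \<le> k" for k
    using dI_triangle_less[OF Vs V] N that \<open>N \<le> \<phi> j\<close> by blast
  then show "\<forall>\<^sub>F k in sequentially. \<bar>dI sc sc' (Vs k) V\<bar> < ereal e"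
    by (auto simp: eventually_sequentially dI_nonneg)
qed

theorem lemma4p1:
  fixes sc :: "'k::field \<Rightarrow> 'v::ab_group_add \<Rightarrow> 'v"
    and Vs :: "nat \<Rightarrow> ('n::finite, 'v) pmod"
  assumes vs: "vector_space sc"
    and mods: "\<And>k. is_pmod sc (Vs k)"
    and cauchy: "\<And>e. e > 0 \<Longrightarrow> \<exists>N. \<forall>k\<ge>N. \<forall>m\<ge>N. dI sc sc (Vs k) (Vs m) < ereal e"
  shows "\<exists>V :: ('n, nat \<Rightarrow> 'v) pmod.
           is_pmod (fun_scale sc) V \<and>
           ((\<lambda>k. dI sc (fun_scale sc) (Vs k) V) \<longlonglongrightarrow> 0) \<and>
           (\<exists>\<phi> \<epsilon> c f \<iota>. strict_mono \<phi> \<and>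
              (\<forall>j. \<exists>g. interleaving sc sc (\<epsilon> j) (Vs (\<phi> j)) (Vs (\<phi> (Suc j))) (f j) g) \<and>
              (\<forall>j. c (Suc j) = c j + \<epsilon> j) \<and>
              is_seq_colim sc (fun_scale sc)
                 (\<lambda>j. shift_pmod (c j) (Vs (\<phi> j)))
                 (\<lambda>j s. f j (sh (c j) s))
                 V \<iota>)"
proof -
  obtain \<phi> \<epsilon> f h where \<phi>: "strict_mono \<phi>" and \<epsilon>: "summable \<epsilon>"
    and fh: "\<And>j. interleaving sc sc (\<epsilon> j) (Vs (\<phi> j)) (Vs (\<phi> (Suc j))) (f j) (h j)"
    using dI_cauchy_interleaved_subseq[OF cauchy] by blast
  define c where "c = (\<lambda>j. - (\<Sum>i. \<epsilon> (i + j)))"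
  obtain V \<iota> where V: "is_pmod (fun_scale sc) V"
    and colim: "is_seq_colim sc (fun_scale sc) (\<lambda>j. shift_pmod (c j) (Vs (\<phi> j)))
      (\<lambda>j s. f j (sh (c j) s)) V \<iota>"
    and interleaved: "\<And>j. interleaved sc (fun_scale sc) (- c j) (Vs (\<phi> j)) V"
    using seq_colim_of_interleavings[OF vs mods fh \<epsilon>] unfolding c_def by blast
  have "(\<lambda>j. - c j) \<longlonglongrightarrow> 0"
    using suminf_exist_split2[OF \<epsilon>] by (simp add: c_def)
  then have "(\<lambda>k. dI sc (fun_scale sc) (Vs k) V) \<longlonglongrightarrow> 0"
    using dI_tendsto_0_of_subseq[OF mods V cauchy \<phi>] interleaved by blast
  moreover have "c (Suc j) = c j + \<epsilon> j" for j
    using suminf_offset_Suc[OF \<epsilon>, of j] unfolding c_def by linarith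
  ultimately show ?thesis
    using V \<phi> fh colim by blast
qed

end
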